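(* Let $\mathcal{C}\subseteq\mathbb{R}^n$ be a nonempty closed convex set, $\theta^*\in\mathbb{R}^n$, $Z$ a random vector with $\mathbb{E}Z=0$ and $\mathbb{E}\|Z\|^2<\infty$, and for $\sigma>0$ let $Y=\theta^*+\sigma Z$ and $\hat\theta(Y)=\Pi_{\mathcal{C}}(Y)$. Suppose $$\sup_{x\in\mathbb{R}^n}\Big(\|\Pi_{F_{\mathcal{C}}(\Pi_{\mathcal{C}}(\theta^* ))}(x)\|^2-\|\Pi_{K_{\mathcal{C}}}(x)\|^2\Big)<\infty.$$ Then $$\lim_{\sigma\to\infty}\frac{1}{\sigma^2}M(\hat\theta,\theta^* )=\lim_{\sigma\to\infty}\frac{1}{\sigma^2}E(\hat\theta,\theta^* )=\delta(K_{\mathcal{C}}).$$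
   Context: $\Pi_S$ is Euclidean projection onto a closed convex set $S$. For $\theta_0\in\mathcal{C}$, $F_{\mathcal{C}}(\theta_0)=\{\theta-\theta_0:\theta\in\mathcal{C}\}$ and $T_{\mathcal{C}}(\theta_0)=\mathrm{cl}\{\alpha(\theta-\theta_0):\alpha\ge0,\theta\in\mathcal{C}\}$. The core cone is $K_{\mathcal{C}}=\bigcap_{\theta\in\mathcal{C}}T_{\mathcal{C}}(\theta)$. Misspecified risk: $M(\hat\theta,\theta^* )=\mathbb{E}\|\hat\theta(Y)-\Pi_{\mathcal{C}}(\theta^* )\|^2$; excess risk: $E(\hat\theta,\theta^* )=\mathbb{E}\|\hat\theta(Y)-\theta^*\|^2-\|\Pi_{\mathcal{C}}(\theta^* )-\theta^*\|^2$. For a closed convex cone $T$, $\delta(T)=\mathbb{E}\|\Pi_T(Z)\|^2$ (expectation over the distribution of $Z$). *)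

theory Defs
  imports "HOL-Analysis.Analysis" "HOL-Probability.Probability"
begin

abbreviation proj :: "'a::euclidean_space set \<Rightarrow> 'a \<Rightarrow> 'a" where
  "proj S x \<equiv> closest_point S x"

definition feasible_dirs :: "'a::euclidean_space set \<Rightarrow> 'a \<Rightarrow> 'a set" where
  "feasible_dirs C \<theta>0 = {\<theta> - \<theta>0 | \<theta>. \<theta> \<in> C}"

definition tangent_cone :: "'a::euclidean_space set \<Rightarrow> 'a \<Rightarrow> 'a set" where
  "tangent_cone C \<theta>0 = closure {\<alpha> *\<^sub>R (\<theta> - \<theta>0) | \<alpha> \<theta>. \<alpha> \<ge> 0 \<and> \<theta> \<in> C}"

definition core_cone :: "'a::euclidean_space set \<Rightarrow> 'a set" where
  "core_cone C = (\<Inter>\<theta>\<in>C. tangent_cone C \<theta>)"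

end

theory Submission
  imports Defs
begin

(*
  Put p = proj C \<theta>s and g\<^sub>\<sigma>(z) = (proj C (\<theta>s + \<sigma> z) - p) / \<sigma>. Both risks, divided by \<sigma>^2,
  are expectations of |g\<^sub>\<sigma>(Z)|^2 plus a cross term of order 1/\<sigma>. The projection is
  1-Lipschitz, so |g\<^sub>\<sigma>(z)| \<le> |z|, and g\<^sub>\<sigma>(z) tends to the projection of z onto the
  recession cone K of C: every cluster point lies in K, and dividing the variational
  inequality of proj C at the test point p + \<sigma> y (y \<in> K) by \<sigma>^2 yields in the limit the
  variational inequality characterising proj K z. Dominated convergence gives the
  limit of the risks, and for a nonempty closed convex set the core cone is the recession
  cone.
*)

definition recession_cone :: "'a::real_vector set \<Rightarrow> 'a set" where
  "recession_cone C = {d. \<forall>x\<in>C. \<forall>t\<ge>0. x + t *\<^sub>R d \<in> C}"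

lemma zero_in_recession_cone: "0 \<in> recession_cone C"
  unfolding recession_cone_def by simp

lemma recession_coneD: "d \<in> recession_cone C \<Longrightarrow> x \<in> C \<Longrightarrow> 0 \<le> t \<Longrightarrow> x + t *\<^sub>R d \<in> C"
  unfolding recession_cone_def by blast

lemma convex_recession_cone:
  assumes "convex C"
  shows "convex (recession_cone C)"
proof (rule convexI)
  fix d e u v assume d: "d \<in> recession_cone C" and e: "e \<in> recession_cone C"
    and uv: "0 \<le> u" "0 \<le> v" "u + v = (1::real)"
  show "u *\<^sub>R d + v *\<^sub>R e \<in> recession_cone C"
    unfolding recession_cone_def
  proof (intro CollectI ballI allI impI)
    fix x t assume "x \<in> C" "(0::real) \<le> t"
    then have "x + t *\<^sub>R d \<in> C" "x + t *\<^sub>R e \<in> C"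
      using recession_coneD[OF d] recession_coneD[OF e] by auto
    from convexD[OF assms this uv]
    have "u *\<^sub>R (x + t *\<^sub>R d) + v *\<^sub>R (x + t *\<^sub>R e) \<in> C" .
    moreover have "u *\<^sub>R (x + t *\<^sub>R d) + v *\<^sub>R (x + t *\<^sub>R e) = x + t *\<^sub>R (u *\<^sub>R d + v *\<^sub>R e)"
      using uv(3) by (simp add: algebra_simps) (simp flip: scaleR_add_left)
    ultimately show "x + t *\<^sub>R (u *\<^sub>R d + v *\<^sub>R e) \<in> C"
      by simp
  qed
qed

lemma closed_recession_cone:
  fixes C :: "'a::real_normed_vector set"
  assumes "closed C"
  shows "closed (recession_cone C)"
proof -
  have "recession_cone C = (\<Inter>x\<in>C. \<Inter>t\<in>{0..}. (\<lambda>d. x + t *\<^sub>R d) -` C)"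
    unfolding recession_cone_def by auto
  then show ?thesis
    by (simp only:) (intro closed_INT ballI closed_vimage[OF assms] continuous_intros)
qed

lemma closest_point_eqI:
  fixes S :: "'a::euclidean_space set"
  assumes "convex S" "closed S" "x \<in> S" "\<And>y. y \<in> S \<Longrightarrow> inner (a - x) (y - x) \<le> 0"
  shows "closest_point S a = x"
proof -
  define p where "p = closest_point S a"
  have "inner (a - p) (x - p) \<le> 0"
    unfolding p_def by (rule closest_point_dot[OF assms(1-3)])
  moreover have "inner (a - x) (p - x) \<le> 0"
    using assms(4) closest_point_in_set[OF assms(2)] assms(3) unfolding p_def by blast
  moreover have "inner (x - p) (x - p) = inner (a - p) (x - p) + inner (a - x) (p - x)"
    by (simp add: inner_diff_left inner_diff_right inner_commute)
  ultimately have "inner (x - p) (x - p) \<le> 0" by linarith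
  then show ?thesis
    unfolding p_def by (metis inner_gt_zero_iff not_le right_minus_eq)
qed

lemma tangent_cone_closest_point_subset:
  fixes C :: "'a::euclidean_space set"
  assumes "convex C" "closed C"
  shows "tangent_cone C (closest_point C x) \<subseteq> {v. inner (x - closest_point C x) v \<le> 0}"
  unfolding tangent_cone_def
proof (rule closure_minimal)
  show "{\<alpha> *\<^sub>R (\<theta> - closest_point C x) |\<alpha> \<theta>. 0 \<le> \<alpha> \<and> \<theta> \<in> C}
      \<subseteq> {v. inner (x - closest_point C x) v \<le> 0}"
    using closest_point_dot[OF assms] by (auto simp: mult_nonneg_nonpos)
qed (rule closed_halfspace_le)

lemma core_cone_eq_recession_cone:
  fixes C :: "'a::euclidean_space set"
  assumes "convex C" "closed C" "C \<noteq> {}"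
  shows "core_cone C = recession_cone C"
proof
  show "recession_cone C \<subseteq> core_cone C"
  proof
    fix d assume d: "d \<in> recession_cone C"
    have "d \<in> tangent_cone C x" if "x \<in> C" for x
    proof -
      have "x + d \<in> C" using recession_coneD[OF d that, of 1] by simp
      then have "\<exists>\<alpha> \<theta>. d = \<alpha> *\<^sub>R (\<theta> - x) \<and> 0 \<le> \<alpha> \<and> \<theta> \<in> C"
        by (intro exI[of _ 1] exI[of _ "x + d"]) simp
      then have "d \<in> {\<alpha> *\<^sub>R (\<theta> - x) |\<alpha> \<theta>. 0 \<le> \<alpha> \<and> \<theta> \<in> C}"
        by (simp only: mem_Collect_eq)
      then show ?thesis unfolding tangent_cone_def by (rule subsetD[OF closure_subset])
    qed
    then show "d \<in> core_cone C" unfolding core_cone_def by blast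
  qed
next
  show "core_cone C \<subseteq> recession_cone C"
  proof
    fix d assume d: "d \<in> core_cone C"
    have "x + t *\<^sub>R d \<in> C" if "x \<in> C" "t \<ge> 0" for x t
    proof -
      define p where "p = closest_point C (x + t *\<^sub>R d)"
      have "p \<in> C" unfolding p_def by (rule closest_point_in_set[OF assms(2,3)])
      then have "d \<in> tangent_cone C p"
        using d unfolding core_cone_def by blast
      then have "inner (x + t *\<^sub>R d - p) d \<le> 0"
        using tangent_cone_closest_point_subset[OF assms(1,2), of "x + t *\<^sub>R d"] unfolding p_def by blast
      moreover have "inner (x + t *\<^sub>R d - p) (x - p) \<le> 0"
        unfolding p_def by (rule closest_point_dot[OF assms(1,2) that(1)])
      moreover have "inner (x + t *\<^sub>R d - p) (x + t *\<^sub>R d - p)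
          = inner (x + t *\<^sub>R d - p) (x - p) + t * inner (x + t *\<^sub>R d - p) d"
        by (simp add: inner_diff_right inner_add_right)
      ultimately have "inner (x + t *\<^sub>R d - p) (x + t *\<^sub>R d - p) \<le> 0"
        using mult_nonneg_nonpos[OF that(2)] by (smt (verit))
      then have "x + t *\<^sub>R d = p"
        by (metis inner_gt_zero_iff not_le right_minus_eq)
      with \<open>p \<in> C\<close> show ?thesis by simp
    qed
    then show "d \<in> recession_cone C" unfolding recession_cone_def by blast
  qed
qed

lemma recession_cone_if_scaled_limit:
  fixes C :: "'a::real_normed_vector set"
  assumes "closed C" "convex C" "\<And>n. x n \<in> C" "\<And>n. 0 < s n"
    and "s \<longlonglongrightarrow> 0" "(\<lambda>n. s n *\<^sub>R x n) \<longlonglongrightarrow> d"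
  shows "d \<in> recession_cone C"
  unfolding recession_cone_def
proof (intro CollectI ballI allI impI)
  fix y t assume "y \<in> C" "(0::real) \<le> t"
  show "y + t *\<^sub>R d \<in> C"
  proof (rule Lim_in_closed_set[OF assms(1)])
    have "(\<lambda>n. t * s n) \<longlonglongrightarrow> t * 0"
      by (intro tendsto_intros assms(5))
    then have "\<forall>\<^sub>F n in sequentially. t * s n < 1"
      by (simp add: order_tendstoD(2))
    then show "\<forall>\<^sub>F n in sequentially. (1 - t * s n) *\<^sub>R y + (t * s n) *\<^sub>R x n \<in> C"
    proof eventually_elim
      case (elim n)
      then show ?case
        using convexD[OF assms(2) \<open>y \<in> C\<close> assms(3)[of n], of "1 - t * s n" "t * s n"]
          \<open>0 \<le> t\<close> assms(4)[of n] by simp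
    qed
    have "(\<lambda>n. y - t *\<^sub>R (s n *\<^sub>R y) + t *\<^sub>R (s n *\<^sub>R x n)) \<longlonglongrightarrow> y - t *\<^sub>R (0 *\<^sub>R y) + t *\<^sub>R d"
      by (intro tendsto_intros assms(5,6))
    then show "(\<lambda>n. (1 - t * s n) *\<^sub>R y + (t * s n) *\<^sub>R x n) \<longlonglongrightarrow> y + t *\<^sub>R d"
      by (simp add: algebra_simps)
  qed simp
qed

lemma scaled_closest_point_limit:
  fixes C :: "'a::euclidean_space set"
  assumes "closed C" "convex C" "C \<noteq> {}"
    and s: "filterlim s at_top sequentially" "\<And>n. 0 < s n"
    and lim: "(\<lambda>n. inverse (s n) *\<^sub>R closest_point C (a + s n *\<^sub>R z)) \<longlonglongrightarrow> l"
  shows "l = closest_point (recession_cone C) z"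
proof -
  define p where "p n = closest_point C (a + s n *\<^sub>R z)" for n
  define c where "c = closest_point C a"
  have pC: "p n \<in> C" for n
    unfolding p_def by (rule closest_point_in_set[OF assms(1,3)])
  have inv0: "(\<lambda>n. inverse (s n)) \<longlonglongrightarrow> 0"
    by (rule tendsto_inverse_0_at_top[OF s(1)])
  have lK: "l \<in> recession_cone C"
    using recession_cone_if_scaled_limit[OF assms(1,2) pC _ inv0] s(2) lim
    unfolding p_def by simp
  have "inner (z - l) (y - l) \<le> 0" if yK: "y \<in> recession_cone C" for y
  proof (rule tendsto_upperbound[OF _ always_eventually])
    have "c + s n *\<^sub>R y \<in> C" for n
      unfolding c_def using recession_coneD[OF yK closest_point_in_set[OF assms(1,3)]] s(2)[of n]
      by simp
    then have "inner (a + s n *\<^sub>R z - p n) (c + s n *\<^sub>R y - p n) \<le> 0" for n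
      unfolding p_def by (rule closest_point_dot[OF assms(2,1)])
    then show "\<forall>n. inner (inverse (s n) *\<^sub>R (a + s n *\<^sub>R z - p n))
                         (inverse (s n) *\<^sub>R (c + s n *\<^sub>R y - p n)) \<le> 0"
      using s(2) by (simp add: mult_nonneg_nonpos less_imp_le)
    have "(\<lambda>n. inner (inverse (s n) *\<^sub>R a + z - inverse (s n) *\<^sub>R p n)
                     (inverse (s n) *\<^sub>R c + y - inverse (s n) *\<^sub>R p n))
          \<longlonglongrightarrow> inner (0 *\<^sub>R a + z - l) (0 *\<^sub>R c + y - l)"
      using lim unfolding p_def by (intro tendsto_intros inv0)
    moreover have "inverse (s n) *\<^sub>R (b + s n *\<^sub>R x - p n) = inverse (s n) *\<^sub>R b + x - inverse (s n) *\<^sub>R p n"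
      for n b x
      using s(2)[of n] by (simp add: algebra_simps)
    ultimately show "(\<lambda>n. inner (inverse (s n) *\<^sub>R (a + s n *\<^sub>R z - p n))
                     (inverse (s n) *\<^sub>R (c + s n *\<^sub>R y - p n))) \<longlonglongrightarrow> inner (z - l) (y - l)"
      by simp
  qed simp
  then show ?thesis
    by (intro closest_point_eqI[symmetric] lK convex_recession_cone closed_recession_cone assms)
qed

lemma LIMSEQ_if_bounded_and_subseq_limits_eq:
  fixes x :: "nat \<Rightarrow> 'a::heine_borel"
  assumes "bounded (range x)"
    and "\<And>r l. strict_mono r \<Longrightarrow> (x \<circ> r) \<longlonglongrightarrow> l \<Longrightarrow> l = q"
  shows "x \<longlonglongrightarrow> q"
proof (rule ccontr)
  assume "\<not> x \<longlonglongrightarrow> q"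
  then obtain e where "e > 0" and "\<not> (\<forall>\<^sub>F n in sequentially. dist (x n) q < e)"
    unfolding tendsto_iff by auto
  from this(2) have "\<exists>\<^sub>F n in sequentially. e \<le> dist (x n) q"
    unfolding frequently_def not_le .
  then have "infinite {n. e \<le> dist (x n) q}"
    unfolding cofinite_eq_sequentially[symmetric] frequently_cofinite .
  then obtain r :: "nat \<Rightarrow> nat" where r: "strict_mono r" and far: "\<And>n. e \<le> dist (x (r n)) q"
    using infinite_enumerate by blast
  have "bounded (range (x \<circ> r))"
    using assms(1) by (rule bounded_subset) (auto simp: image_subset_iff)
  then obtain l r' where r': "strict_mono r'" and lim: "(x \<circ> r \<circ> r') \<longlonglongrightarrow> l"
    using bounded_imp_convergent_subsequence[of "x \<circ> r"] by blast
  have "l = q"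
    using lim unfolding comp_assoc by (rule assms(2)[OF strict_mono_o[OF r r']])
  with lim \<open>e > 0\<close> have "\<forall>\<^sub>F n in sequentially. dist (x (r (r' n))) q < e"
    unfolding tendsto_iff by simp
  then obtain N where "\<forall>n\<ge>N. dist (x (r (r' n))) q < e"
    unfolding eventually_sequentially ..
  with far[of "r' N"] show False by auto
qed

lemma tendsto_scaled_closest_point:
  fixes C :: "'a::euclidean_space set"
  assumes "closed C" "convex C" "C \<noteq> {}"
  shows "((\<lambda>\<sigma>. inverse \<sigma> *\<^sub>R closest_point C (a + \<sigma> *\<^sub>R z)) \<longlongrightarrow> closest_point (recession_cone C) z) at_top"
proof (rule tendsto_at_topI_sequentially)
  define f where "f \<sigma> = inverse \<sigma> *\<^sub>R closest_point C (a + \<sigma> *\<^sub>R z)" for \<sigma>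
  fix X :: "nat \<Rightarrow> real" assume X: "filterlim X at_top sequentially"
  \<comment> \<open>Y agrees with X eventually, and f is bounded on [1, \<infinity>).\<close>
  define Y where "Y n = max 1 (X n)" for n
  have Y: "filterlim Y at_top sequentially"
    by (rule filterlim_at_top_mono[OF X]) (simp add: Y_def)
  have "norm (f \<sigma>) \<le> norm (closest_point C a) + norm z" if "1 \<le> \<sigma>" for \<sigma>
  proof -
    have "norm (closest_point C (a + \<sigma> *\<^sub>R z)) \<le> norm (closest_point C a) + \<sigma> * norm z"
      using closest_point_lipschitz[OF assms(2,1,3), of "a + \<sigma> *\<^sub>R z" a] that
        norm_triangle_ineq2[of "closest_point C (a + \<sigma> *\<^sub>R z)" "closest_point C a"]
      by (simp add: dist_norm)
    then have "norm (f \<sigma>) \<le> (norm (closest_point C a) + \<sigma> * norm z) / \<sigma>"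
      using that by (simp add: f_def divide_right_mono field_simps)
    also have "\<dots> \<le> norm (closest_point C a) + norm z"
      using mult_right_mono[OF that norm_ge_zero[of "closest_point C a"]] that
      by (simp add: field_simps)
    finally show ?thesis .
  qed
  then have "bounded (range (f \<circ> Y))"
    unfolding bounded_iff Y_def by (intro exI[of _ "norm (closest_point C a) + norm z"]) auto
  moreover have "l = closest_point (recession_cone C) z"
    if "strict_mono r" "(f \<circ> Y \<circ> r) \<longlonglongrightarrow> l" for r l
  proof (rule scaled_closest_point_limit[OF assms])
    show "filterlim (Y \<circ> r) at_top sequentially"
      using filterlim_compose[OF Y filterlim_subseq[OF that(1)]] by (simp add: o_def)
    show "0 < (Y \<circ> r) n" for n
      by (simp add: Y_def)
    show "(\<lambda>n. inverse ((Y \<circ> r) n) *\<^sub>R closest_point C (a + (Y \<circ> r) n *\<^sub>R z)) \<longlonglongrightarrow> l"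
      using that(2) by (simp add: f_def o_def)
  qed
  ultimately have "(f \<circ> Y) \<longlonglongrightarrow> closest_point (recession_cone C) z"
    by (rule LIMSEQ_if_bounded_and_subseq_limits_eq)
  moreover have "\<forall>\<^sub>F n in sequentially. Y n = X n"
    using filterlim_at_top[THEN iffD1, OF X, rule_format, of 1] by eventually_elim (simp add: Y_def)
  ultimately show "(\<lambda>n. f (X n)) \<longlonglongrightarrow> closest_point (recession_cone C) z"
    by (rule Lim_transform_eventually[OF _ eventually_mono]) (simp add: o_def)
qed

definition projection_increment :: "'a::euclidean_space set \<Rightarrow> 'a \<Rightarrow> real \<Rightarrow> 'a \<Rightarrow> 'a" where
  "projection_increment C a \<sigma> z = inverse \<sigma> *\<^sub>R (closest_point C (a + \<sigma> *\<^sub>R z) - closest_point C a)"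

lemma norm_projection_increment_le:
  assumes "closed C" "convex C" "C \<noteq> {}" "0 < \<sigma>"
  shows "norm (projection_increment C a \<sigma> z) \<le> norm z"
proof -
  have "norm (projection_increment C a \<sigma> z)
      = dist (closest_point C (a + \<sigma> *\<^sub>R z)) (closest_point C a) / \<sigma>"
    using assms(4) by (simp add: projection_increment_def dist_norm divide_inverse_commute)
  also have "\<dots> \<le> dist (a + \<sigma> *\<^sub>R z) a / \<sigma>"
    using assms(4) by (intro divide_right_mono closest_point_lipschitz[OF assms(2,1,3)]) simp
  also have "\<dots> = norm z"
    using assms(4) by (simp add: dist_norm)
  finally show ?thesis .
qed

lemma tendsto_projection_increment:
  assumes "closed C" "convex C" "C \<noteq> {}"
  shows "((\<lambda>\<sigma>. projection_increment C a \<sigma> z) \<longlongrightarrow> closest_point (recession_cone C) z) at_top"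
proof -
  have "((\<lambda>\<sigma>. inverse \<sigma> *\<^sub>R closest_point C (a + \<sigma> *\<^sub>R z) - inverse \<sigma> *\<^sub>R closest_point C a)
         \<longlongrightarrow> closest_point (recession_cone C) z - 0 *\<^sub>R closest_point C a) at_top"
    by (intro tendsto_intros tendsto_scaled_closest_point assms tendsto_inverse_0_at_top filterlim_ident)
  then show ?thesis
    by (simp add: projection_increment_def scaleR_diff_right)
qed

lemma sq_norm_closest_point_diff_eq:
  assumes "\<sigma> \<noteq> 0"
  shows "(norm (closest_point C (a + \<sigma> *\<^sub>R z) - b))\<^sup>2
    = \<sigma>\<^sup>2 * ((norm (projection_increment C a \<sigma> z))\<^sup>2
        + 2 / \<sigma> * inner (projection_increment C a \<sigma> z) (closest_point C a - b))
      + (norm (closest_point C a - b))\<^sup>2"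
proof -
  define g where "g = projection_increment C a \<sigma> z"
  define w where "w = closest_point C a - b"
  have "closest_point C (a + \<sigma> *\<^sub>R z) - b = \<sigma> *\<^sub>R g + w"
    using assms by (simp add: g_def w_def projection_increment_def)
  then have "(norm (closest_point C (a + \<sigma> *\<^sub>R z) - b))\<^sup>2 = \<sigma>\<^sup>2 * (norm g)\<^sup>2 + 2 * \<sigma> * inner g w + (norm w)\<^sup>2"
    unfolding power2_norm_eq_inner
    by (simp add: inner_add_left inner_add_right inner_commute power2_eq_square algebra_simps)
  then show ?thesis
    using assms unfolding g_def[symmetric] w_def[symmetric] by (simp add: field_simps power2_eq_square)
qed

lemma projection_increment_terms_bound:
  assumes "closed C" "convex C" "C \<noteq> {}" "0 < \<sigma>"
  shows "\<bar>(norm (projection_increment C a \<sigma> z))\<^sup>2 + 2 / \<sigma> * inner (projection_increment C a \<sigma> z) v\<bar>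
    \<le> (norm z)\<^sup>2 + 2 / \<sigma> * (norm z * norm v)"
proof -
  define g where "g = projection_increment C a \<sigma> z"
  have g: "norm g \<le> norm z"
    unfolding g_def by (rule norm_projection_increment_le[OF assms])
  have "\<bar>inner g v\<bar> \<le> norm z * norm v"
    using Cauchy_Schwarz_ineq2[of g v] g by (meson mult_right_mono norm_ge_zero order_trans)
  moreover have "(norm g)\<^sup>2 \<le> (norm z)\<^sup>2"
    using g by (simp add: power_mono)
  moreover have "\<bar>(norm g)\<^sup>2 + 2 / \<sigma> * inner g v\<bar> \<le> (norm g)\<^sup>2 + 2 / \<sigma> * \<bar>inner g v\<bar>"
    using abs_triangle_ineq[of "(norm g)\<^sup>2" "2 / \<sigma> * inner g v"] assms(4) by (simp add: abs_mult)
  ultimately have "\<bar>(norm g)\<^sup>2 + 2 / \<sigma> * inner g v\<bar> \<le> (norm z)\<^sup>2 + 2 / \<sigma> * (norm z * norm v)"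
    using assms(4) by (smt (verit) divide_pos_pos mult_left_mono)
  then show ?thesis unfolding g_def .
qed

lemma
  fixes Z :: "'w \<Rightarrow> 'a::euclidean_space"
  assumes C: "closed C" "convex C" "C \<noteq> {}" and Z [measurable]: "Z \<in> borel_measurable M"
    and int: "integrable M (\<lambda>\<omega>. norm (Z \<omega>))" "integrable M (\<lambda>\<omega>. (norm (Z \<omega>))\<^sup>2)"
  shows integrable_projection_increment_terms:
      "0 < \<sigma> \<Longrightarrow> integrable M (\<lambda>\<omega>. (norm (projection_increment C a \<sigma> (Z \<omega>)))\<^sup>2
          + 2 / \<sigma> * inner (projection_increment C a \<sigma> (Z \<omega>)) v)"
    and tendsto_integral_projection_increment_terms:
      "((\<lambda>\<sigma>. \<integral>\<omega>. (norm (projection_increment C a \<sigma> (Z \<omega>)))\<^sup>2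
          + 2 / \<sigma> * inner (projection_increment C a \<sigma> (Z \<omega>)) v \<partial>M)
        \<longlongrightarrow> (\<integral>\<omega>. (norm (closest_point (recession_cone C) (Z \<omega>)))\<^sup>2 \<partial>M)) at_top"
proof -
  define h where "h \<sigma> \<omega> = (norm (projection_increment C a \<sigma> (Z \<omega>)))\<^sup>2
      + 2 / \<sigma> * inner (projection_increment C a \<sigma> (Z \<omega>)) v" for \<sigma> \<omega>
  define B where "B k \<omega> = (norm (Z \<omega>))\<^sup>2 + k * (norm (Z \<omega>) * norm v)" for k \<omega>
  have [measurable]: "closest_point C \<in> borel_measurable borel"
    by (rule borel_measurable_continuous_onI[OF continuous_on_closest_point[OF C(2,1,3)]])
  have [measurable]: "closest_point (recession_cone C) \<in> borel_measurable borel"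
    by (intro borel_measurable_continuous_onI continuous_on_closest_point convex_recession_cone
        closed_recession_cone C) (auto intro: zero_in_recession_cone)
  have h_meas [measurable]: "h \<sigma> \<in> borel_measurable M" for \<sigma>
    unfolding h_def projection_increment_def by measurable
  have B_int: "integrable M (B k)" for k
    unfolding B_def using int by (intro Bochner_Integration.integrable_add integrable_mult_right integrable_mult_left)
  have h_bound: "norm (h \<sigma> \<omega>) \<le> B (2 / \<sigma>) \<omega>" if "0 < \<sigma>" for \<sigma> \<omega>
    unfolding h_def B_def real_norm_def by (rule projection_increment_terms_bound[OF C that])
  show "integrable M (h \<sigma>)" if "0 < \<sigma>" for \<sigma>
    by (intro Bochner_Integration.integrable_bound[OF B_int[of "2 / \<sigma>"] h_meas] AE_I2
        order_trans[OF h_bound[OF that]]) simp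
  show "((\<lambda>\<sigma>. integral\<^sup>L M (h \<sigma>)) \<longlongrightarrow> \<integral>\<omega>. (norm (closest_point (recession_cone C) (Z \<omega>)))\<^sup>2 \<partial>M) at_top"
  proof (rule integral_dominated_convergence_at_top[OF _ h_meas B_int[of 2]])
    show "(\<lambda>\<omega>. (norm (closest_point (recession_cone C) (Z \<omega>)))\<^sup>2) \<in> borel_measurable M"
      by measurable
    have "((\<lambda>\<sigma>. h \<sigma> \<omega>) \<longlongrightarrow> (norm (closest_point (recession_cone C) (Z \<omega>)))\<^sup>2
        + 2 * 0 * inner (closest_point (recession_cone C) (Z \<omega>)) v) at_top" for \<omega>
      unfolding h_def divide_inverse
      by (intro tendsto_intros tendsto_projection_increment C tendsto_inverse_0_at_top filterlim_ident)
    then show "AE \<omega> in M. ((\<lambda>\<sigma>. h \<sigma> \<omega>) \<longlongrightarrow> (norm (closest_point (recession_cone C) (Z \<omega>)))\<^sup>2) at_top"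
      by simp
    show "\<forall>\<^sub>F \<sigma> in at_top. AE \<omega> in M. norm (h \<sigma> \<omega>) \<le> B 2 \<omega>"
      using eventually_ge_at_top[of "1::real"]
    proof eventually_elim
      case (elim \<sigma>)
      have "B (2 / \<sigma>) \<omega> \<le> B 2 \<omega>" for \<omega>
        unfolding B_def using elim by (intro add_left_mono mult_right_mono) (auto simp: field_simps)
      then show ?case
        using h_bound[of \<sigma>] elim by (intro AE_I2) (smt (verit))
    qed
  qed
qed

lemma (in prob_space) tendsto_scaled_projection_risk:
  fixes Z :: "'a \<Rightarrow> 'b::euclidean_space"
  assumes C: "closed C" "convex C" "C \<noteq> {}" and Z: "Z \<in> borel_measurable M"
    and int: "integrable M (\<lambda>\<omega>. norm (Z \<omega>))" "integrable M (\<lambda>\<omega>. (norm (Z \<omega>))\<^sup>2)"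
  shows "((\<lambda>\<sigma>. ((\<integral>\<omega>. (norm (closest_point C (a + \<sigma> *\<^sub>R Z \<omega>) - b))\<^sup>2 \<partial>M)
                  - (norm (closest_point C a - b))\<^sup>2) / \<sigma>\<^sup>2)
          \<longlongrightarrow> (\<integral>\<omega>. (norm (closest_point (recession_cone C) (Z \<omega>)))\<^sup>2 \<partial>M)) at_top"
proof -
  define w where "w = closest_point C a - b"
  define h where "h \<sigma> \<omega> = (norm (projection_increment C a \<sigma> (Z \<omega>)))\<^sup>2
      + 2 / \<sigma> * inner (projection_increment C a \<sigma> (Z \<omega>)) w" for \<sigma> \<omega>
  have "\<forall>\<^sub>F \<sigma> in at_top. integral\<^sup>L M (h \<sigma>)
      = ((\<integral>\<omega>. (norm (closest_point C (a + \<sigma> *\<^sub>R Z \<omega>) - b))\<^sup>2 \<partial>M) - (norm w)\<^sup>2) / \<sigma>\<^sup>2"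
    using eventually_gt_at_top[of "0::real"]
  proof eventually_elim
    case (elim \<sigma>)
    have "(\<integral>\<omega>. (norm (closest_point C (a + \<sigma> *\<^sub>R Z \<omega>) - b))\<^sup>2 \<partial>M)
        = (\<integral>\<omega>. \<sigma>\<^sup>2 * h \<sigma> \<omega> + (norm w)\<^sup>2 \<partial>M)"
      using elim by (simp add: sq_norm_closest_point_diff_eq h_def w_def)
    also have "\<dots> = \<sigma>\<^sup>2 * integral\<^sup>L M (h \<sigma>) + (norm w)\<^sup>2"
      using integrable_projection_increment_terms[OF C Z int elim, of a w]
      unfolding h_def by (simp add: prob_space)
    finally show ?case
      using elim by simp
  qed
  with tendsto_integral_projection_increment_terms[OF C Z int, of a w] show ?thesis
    unfolding h_def w_def by (rule Lim_transform_eventually)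
qed

theorem proposition3:
  fixes C :: "(real ^ 'n) set" and \<theta>s :: "real ^ 'n"
    and M :: "'w measure" and Z :: "'w \<Rightarrow> real ^ 'n"
  assumes "C \<noteq> {}" and "closed C" and "convex C"
    and "prob_space M"
    and "Z \<in> borel_measurable M"
    and "integrable M Z"
    and "integral\<^sup>L M Z = 0"
    and "integrable M (\<lambda>\<omega>. (norm (Z \<omega>))\<^sup>2)"
    and "bdd_above ((\<lambda>x. (norm (proj (feasible_dirs C (proj C \<theta>s)) x))\<^sup>2
                         - (norm (proj (core_cone C) x))\<^sup>2) ` UNIV)"
  shows "((\<lambda>\<sigma>::real. integral\<^sup>L M (\<lambda>\<omega>. (norm (proj C (\<theta>s + \<sigma> *\<^sub>R Z \<omega>) - proj C \<theta>s))\<^sup>2) / \<sigma>\<^sup>2)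
            \<longlongrightarrow> integral\<^sup>L M (\<lambda>\<omega>. (norm (proj (core_cone C) (Z \<omega>)))\<^sup>2)) at_top \<and>
         ((\<lambda>\<sigma>::real. (integral\<^sup>L M (\<lambda>\<omega>. (norm (proj C (\<theta>s + \<sigma> *\<^sub>R Z \<omega>) - \<theta>s))\<^sup>2)
                        - (norm (proj C \<theta>s - \<theta>s))\<^sup>2) / \<sigma>\<^sup>2)
            \<longlongrightarrow> integral\<^sup>L M (\<lambda>\<omega>. (norm (proj (core_cone C) (Z \<omega>)))\<^sup>2)) at_top"
proof -
  interpret prob_space M by (rule assms(4))
  have C: "closed C" "convex C" "C \<noteq> {}" using assms(1-3) by auto
  have int: "integrable M (\<lambda>\<omega>. norm (Z \<omega>))" "integrable M (\<lambda>\<omega>. (norm (Z \<omega>))\<^sup>2)"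
    using assms(6,8) by (auto intro: integrable_norm)
  note risk = tendsto_scaled_projection_risk[OF C assms(5) int, of \<theta>s]
  show ?thesis
    unfolding core_cone_eq_recession_cone[OF C(2,1,3)]
    using risk[of "proj C \<theta>s"] risk[of \<theta>s] by simp
qed

end
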